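(* Let $n\ge 2$, identify $\mathbb{C}^n\cong\mathbb{R}^{2n}$ with its standard complex structure and coordinates $z_1,\dots,z_n$, and let $w=\mathrm{Re}(dz_1\wedge\cdots\wedge dz_n)$. Let $P\subset\mathbb{C}^n$ be a complex linear subspace of real codimension two. Let $k\in\mathbb{N}\setminus\{0\}$ and $\alpha$ satisfy $k\alpha=2\pi$ and $0<\alpha\le\pi$. For $\beta\in\mathbb{R}$, let $R_{(\beta,P)}$ denote the rotation of $\mathbb{R}^{2n}$ about $P$ by angle $\beta$, i.e. the orthogonal map fixing $P$ pointwise and rotating the real $2$-plane $P^\perp$ by the angle $\beta$. For $i=0,1,\dots,k-1$ let $w_i=R_{(i\alpha,P)}(w)$ be the image of the form $w$ under this rotation. Then each $w_i$ is a special Lagrangian calibration, and $$\sum_{i=0}^{k-1} w_i=0.$$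
   Context: A special Lagrangian (SL) calibration on $\mathbb{C}^n$ is an $n$-form of the form $\mathrm{Re}\big(e^{i\theta}\,d\zeta_1\wedge\cdots\wedge d\zeta_n\big)$, $\theta\in\mathbb{R}$, where $\zeta_1,\dots,\zeta_n$ are complex linear coordinates obtained from $z_1,\dots,z_n$ by a unitary change of coordinates (equivalently, the transform of $\mathrm{Re}(dz_1\wedge\cdots\wedge dz_n)$ by a complex-linear isometry). *)

theory Defs
  imports "HOL-Analysis.Analysis"
begin

text \<open>We model C^n as complex^'n (n = CARD('n)), with its real Euclidean structure
 (real inner product x \<bullet> y = Re(sum conj(x_j) y_j)). A real n-form on C^n is modelled as a
 real-valued function of n-tuples of vectors (tuples indexed by 'n).\<close>

type_synonym 'n nform = "('n \<Rightarrow> complex^'n) \<Rightarrow> real"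

definition complex_subspace :: "(complex^'n) set \<Rightarrow> bool" where
  "complex_subspace P \<longleftrightarrow> subspace P \<and> (\<forall>c::complex. \<forall>x\<in>P. c *s x \<in> P)"

text \<open>The standard form w = Re(dz_1 ^ ... ^ dz_n): (v_1..v_n) maps to Re det[(v_j)_i].\<close>
definition std_form :: "'n::finite nform" where
  "std_form V = Re (det (\<chi> i j. V j $ i))"

definition adjoint_mat :: "complex^'n^'n \<Rightarrow> complex^'n^'n" where
  "adjoint_mat U = (\<chi> i j. cnj (U $ j $ i))"

definition unitary_mat :: "complex^'n::finite^'n \<Rightarrow> bool" where
  "unitary_mat U \<longleftrightarrow> adjoint_mat U ** U = mat 1"

definition SL_calibration :: "'n::finite nform \<Rightarrow> bool" where
  "SL_calibration \<phi> \<longleftrightarrow> (\<exists>(\<theta>::real) (U::complex^'n^'n). unitary_mat U \<and>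
     \<phi> = (\<lambda>V. Re (exp (\<i> * of_real \<theta>) * det (\<chi> i j. (U *v V j) $ i))))"

text \<open>Rotation by angle \<beta> in the real oriented plane with orthonormal basis (e1,e2),
 fixing its orthogonal complement pointwise.\<close>
definition plane_rotation :: "complex^'n \<Rightarrow> complex^'n \<Rightarrow> real \<Rightarrow> complex^'n \<Rightarrow> complex^'n" where
  "plane_rotation e1 e2 \<beta> x =
     x - (x \<bullet> e1) *\<^sub>R e1 - (x \<bullet> e2) *\<^sub>R e2
       + ((x \<bullet> e1) * cos \<beta> - (x \<bullet> e2) * sin \<beta>) *\<^sub>R e1
       + ((x \<bullet> e1) * sin \<beta> + (x \<bullet> e2) * cos \<beta>) *\<^sub>R e2"

definition form_image :: "(complex^'n \<Rightarrow> complex^'n) \<Rightarrow> 'n nform \<Rightarrow> 'n nform" where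
  "form_image R w = (\<lambda>V. w (\<lambda>j. inv R (V j)))"

end

theory Submission
  imports Defs
begin

text \<open>The real 2-plane orthogonal to a complex hyperplane P is a complex line, so an
  orthonormal basis of it has the form e, \<plusminus>\<i> e. Rotating this plane by \<beta> is therefore the
  unitary map multiplying the e-component by e^(\<plusminus>\<i>\<beta>), whose complex determinant is
  e^(\<plusminus>\<i>\<beta>) (a rank-one perturbation of the identity). Hence the rotated form is
  Re(e^(\<mp>\<i>\<beta>) dz_1 \<and> ... \<and> dz_n), an SL calibration, and summing over \<beta> = i\<alpha> gives the real
  part of a sum of all k-th roots of unity times dz_1 \<and> ... \<and> dz_n, which vanishes.\<close>

lemma det_identity_row_replaced:
  fixes z :: "'a::field^'n::finite"
  shows "det (\<chi> i. if i = k then z else axis i 1 :: 'a^'n^'n) = z $ k"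
proof -
  have rows: "row i (mat 1 :: 'a^'n^'n) = axis i 1" for i
    by (simp add: row_def mat_def axis_def vec_eq_iff)
  show ?thesis
    using cramer_lemma_transpose[of k z "mat 1 :: 'a^'n^'n"]
    unfolding rows basis_expansion by simp
qed

lemma det_rows_axis_plus_replaced:
  fixes x z :: "'a::field^'n::finite"
  assumes "finite S" "k \<notin> S"
  shows "det (\<chi> i. if i = k then z else if i \<in> S then axis i 1 + x$i *s z else axis i 1
            :: 'a^'n^'n) = z $ k"
  using assms
proof (induction S rule: finite_induct)
  case empty
  show ?case using det_identity_row_replaced[of k z] by (simp only: empty_iff if_False)
next
  case (insert j S)
  let ?A = "\<chi> i. if i = k then z else if i \<in> insert j S then axis i 1 + x$i *s z else axis i 1
            :: 'a^'n^'n"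
  have "j \<noteq> k" using insert.prems by auto
  then have "det ?A = det (\<chi> i. if i = j then row j ?A + (- x$j) *s row k ?A else row i ?A)"
    by (rule det_row_operation[symmetric])
  also have "(\<chi> i. if i = j then row j ?A + (- x$j) *s row k ?A else row i ?A) =
      (\<chi> i. if i = k then z else if i \<in> S then axis i 1 + x$i *s z else axis i 1)"
    using \<open>j \<noteq> k\<close> insert.hyps(2) by (auto simp: vec_eq_iff row_def)
  finally show ?case using insert by simp
qed

lemma det_rows_axis_plus:
  fixes x z :: "'a::field^'n::finite"
  assumes "finite S"
  shows "det (\<chi> i. if i \<in> S then axis i 1 + x$i *s z else axis i 1 :: 'a^'n^'n)
       = 1 + (\<Sum>i\<in>S. x$i * z$i)"
  using assms
proof (induction S rule: finite_induct)
  case empty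
  have "(\<chi> i. axis i 1 :: 'a^'n^'n) = mat 1"
    by (simp add: vec_eq_iff mat_def axis_def)
  then show ?case by simp
next
  case (insert k S)
  let ?B = "\<lambda>i. if i \<in> S then axis i 1 + x$i *s z else axis i (1::'a)"
  have "det (\<chi> i. if i \<in> insert k S then axis i 1 + x$i *s z else axis i 1 :: 'a^'n^'n)
      = det (\<chi> i. if i = k then axis i 1 + x$k *s z else ?B i :: 'a^'n^'n)"
    by (rule arg_cong[where f = det]) (auto simp: vec_eq_iff)
  also have "\<dots> = det (\<chi> i. if i = k then axis i 1 else ?B i :: 'a^'n^'n)
      + x$k * det (\<chi> i. if i = k then z else ?B i :: 'a^'n^'n)"
    by (simp only: det_row_add det_row_mul)
  also have "(\<chi> i. if i = k then axis i 1 else ?B i :: 'a^'n^'n) = (\<chi> i. ?B i)"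
    using insert.hyps(2) by (auto simp: vec_eq_iff)
  also have "det (\<chi> i. if i = k then z else ?B i :: 'a^'n^'n) = z$k"
    by (rule det_rows_axis_plus_replaced[OF insert.hyps])
  finally show ?case using insert by (simp add: algebra_simps)
qed

lemma det_mat_1_plus_outer:
  fixes x z :: "'a::field^'n::finite"
  shows "det (mat 1 + (\<chi> i j. x$i * z$j)) = 1 + (\<Sum>i\<in>UNIV. x$i * z$i)"
proof -
  have "mat 1 + (\<chi> i j. x$i * z$j) = (\<chi> i. if i \<in> UNIV then axis i 1 + x$i *s z else axis i 1)"
    by (simp add: vec_eq_iff mat_def axis_def)
  then show ?thesis using det_rows_axis_plus[of UNIV x z] by simp
qed

lemma matrix_columns_mult_vector:
  "(\<chi> i j. (A *v V j) $ i) = A ** (\<chi> i j. V j $ i)"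
  by (simp add: vec_eq_iff matrix_vector_mult_def matrix_matrix_mult_def)

definition cinner :: "complex^'n::finite \<Rightarrow> complex^'n \<Rightarrow> complex" where
  "cinner x y = (\<Sum>j\<in>UNIV. cnj (x$j) * y$j)"

lemma inner_vec_complex: "x \<bullet> y = Re (cinner x y)"
  by (simp add: cinner_def inner_vec_def inner_complex_def Re_sum)

lemma cinner_commute: "cinner y x = cnj (cinner x y)"
  by (simp add: cinner_def cnj_sum mult.commute)

lemma cinner_add_right: "cinner x (y + z) = cinner x y + cinner x z"
  by (simp add: cinner_def sum.distrib distrib_left)

lemma cinner_diff_right: "cinner x (y - z) = cinner x y - cinner x z"
  by (simp add: cinner_def sum_subtractf right_diff_distrib)

lemma cinner_scale_right: "cinner x (c *s y) = c * cinner x y"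
  by (simp add: cinner_def sum_distrib_left algebra_simps)

lemma cinner_scale_left: "cinner (c *s x) y = cnj c * cinner x y"
  by (simp add: cinner_def sum_distrib_left algebra_simps)

lemma cinner_self_eq_1: "norm e = 1 \<Longrightarrow> cinner e e = 1"
proof -
  assume "norm e = 1"
  then have "Re (cinner e e) = 1"
    by (simp flip: inner_vec_complex power2_norm_eq_inner)
  moreover have "Im (cinner e e) = 0"
    by (simp add: cinner_def Im_sum algebra_simps)
  ultimately show ?thesis by (simp add: complex_eq_iff)
qed

lemma complex_subspace_orthogonal_cinner:
  assumes "complex_subspace P" "\<forall>x\<in>P. x \<bullet> e = 0" "x \<in> P"
  shows "cinner x e = 0"
proof -
  have "\<i> *s x \<in> P" using assms(1,3) by (simp add: complex_subspace_def)
  then have "Re (cinner (\<i> *s x) e) = 0" using assms(2) by (simp add: inner_vec_complex)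
  then have "Im (cinner x e) = 0" by (simp add: cinner_scale_left)
  moreover have "Re (cinner x e) = 0" using assms(2,3) by (simp add: inner_vec_complex)
  ultimately show ?thesis by (simp add: complex_eq_iff)
qed

text \<open>The real orthogonal complement of P has dimension 2 and contains the orthonormal
  vectors e and \<i> e, so it is the complex line through e.\<close>
lemma orthogonal_complex_hyperplane_in_line:
  fixes P :: "(complex^'n::finite) set"
  assumes P: "complex_subspace P" "dim P = 2 * CARD('n) - 2"
    and e: "norm e = 1" "\<forall>x\<in>P. x \<bullet> e = 0"
    and y: "\<forall>x\<in>P. x \<bullet> y = 0"
  shows "y = cinner e y *s e"
proof (rule ccontr)
  define f where "f = y - cinner e y *s e"
  assume "\<not> ?thesis"
  then have "f \<noteq> 0" by (simp add: f_def)
  define Q where "Q = {z. \<forall>x\<in>P. orthogonal x z}"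
  have "dim Q + dim P = dim (UNIV :: (complex^'n) set)"
    unfolding Q_def using dim_subspace_orthogonal_to_vectors[of P UNIV] P(1)
    by (simp add: complex_subspace_def)
  with P(2) have "dim Q = 2"
    using zero_less_card_finite[where 'a='n] by (simp del: zero_less_card_finite)
  have ee: "cinner e e = 1" using e(1) by (rule cinner_self_eq_1)
  have hf: "cinner e f = 0" by (simp add: f_def cinner_diff_right cinner_scale_right ee)
  define S where "S = {e, \<i> *s e, f}"
  have nz: "e \<noteq> 0" "\<i> *s e \<noteq> 0"
    using e(1) ee by (auto simp: cinner_scale_left cinner_scale_right cinner_def)
  have orth: "e \<bullet> (\<i> *s e) = 0" "e \<bullet> f = 0" "(\<i> *s e) \<bullet> f = 0"
    by (simp_all add: inner_vec_complex cinner_scale_right cinner_scale_left ee hf)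
  then have "e \<noteq> \<i> *s e" "e \<noteq> f" "\<i> *s e \<noteq> f"
    using nz by (metis inner_eq_zero_iff)+
  then have "card S = 3" by (simp add: S_def)
  have "pairwise orthogonal S" "0 \<notin> S"
    using orth nz \<open>f \<noteq> 0\<close> unfolding S_def pairwise_insert
    by (auto simp: orthogonal_def inner_commute)
  then have "independent S" by (simp add: pairwise_orthogonal_independent)
  moreover have "S \<subseteq> Q"
    using complex_subspace_orthogonal_cinner[OF P(1) e(2)] e(2) y
    by (auto simp: S_def Q_def orthogonal_def inner_vec_complex f_def
        cinner_diff_right cinner_scale_right)
  ultimately have "card S \<le> dim Q" by (simp add: independent_card_le_dim)
  with \<open>card S = 3\<close> \<open>dim Q = 2\<close> show False by simp
qed

lemma orthonormal_complex_multiple: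
  assumes "norm e1 = 1" "norm e2 = 1" "e1 \<bullet> e2 = 0" "e2 = c *s e1"
  shows "\<exists>s\<in>{1, -1}. e2 = (\<i> * of_real s) *s e1"
proof -
  have "Re c = 0"
    using assms by (simp add: inner_vec_complex cinner_scale_right cinner_self_eq_1)
  moreover have "cnj c * c = 1"
    using cinner_self_eq_1[OF assms(2)]
    by (simp add: assms(4) cinner_scale_left cinner_scale_right cinner_self_eq_1[OF assms(1)] mult.commute)
  ultimately have "Im c \<in> {1, -1}" "c = \<i> * of_real (Im c)"
    by (auto simp: complex_eq_iff power2_eq_square power2_eq_1_iff[symmetric])
  with assms(4) show ?thesis by metis
qed

definition complex_line_rotation :: "complex^'n::finite \<Rightarrow> complex \<Rightarrow> complex^'n \<Rightarrow> complex^'n" where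
  "complex_line_rotation e c x = x + ((c - 1) * cinner e x) *s e"

lemma plane_rotation_eq_complex_line_rotation:
  assumes "s \<in> {1, -1}"
  shows "plane_rotation e ((\<i> * of_real s) *s e) \<beta> = complex_line_rotation e (cis (s * \<beta>))"
proof
  fix x
  have "x \<bullet> e = Re (cinner e x)" "x \<bullet> ((\<i> * of_real s) *s e) = s * Im (cinner e x)"
    by (simp_all add: inner_vec_complex cinner_scale_right cinner_commute[of x])
  then show "plane_rotation e ((\<i> * of_real s) *s e) \<beta> x = complex_line_rotation e (cis (s * \<beta>)) x"
    unfolding plane_rotation_def complex_line_rotation_def vec_eq_iff
    using assms by (auto simp: complex_eq_iff algebra_simps)
qed

lemma complex_line_rotation_compose:
  assumes "cinner e e = 1"
  shows "complex_line_rotation e c (complex_line_rotation e d x) = complex_line_rotation e (c * d) x"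
proof -
  have "cinner e (complex_line_rotation e d x) = d * cinner e x"
    unfolding complex_line_rotation_def cinner_add_right cinner_scale_right assms
    by (simp add: algebra_simps)
  then show ?thesis
    by (simp add: complex_line_rotation_def vec_eq_iff algebra_simps)
qed

lemma inv_complex_line_rotation:
  assumes "cinner e e = 1" "c \<noteq> 0"
  shows "inv (complex_line_rotation e c) = complex_line_rotation e (inverse c)"
proof (rule inv_unique_comp)
  have "complex_line_rotation e 1 = id"
    by (simp add: complex_line_rotation_def fun_eq_iff)
  then show "complex_line_rotation e c \<circ> complex_line_rotation e (inverse c) = id"
    "complex_line_rotation e (inverse c) \<circ> complex_line_rotation e c = id"
    using assms by (simp_all add: fun_eq_iff complex_line_rotation_compose)
qed

lemma complex_line_rotation_matrix:
  "complex_line_rotation e c x = (mat 1 + (\<chi> i j. ((c - 1) * e$i) * cnj (e$j))) *v x"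
proof -
  have "(\<chi> i j. ((c - 1) * e$i) * cnj (e$j)) *v x = ((c - 1) * cinner e x) *s e"
    by (simp add: vec_eq_iff matrix_vector_mult_def cinner_def sum_distrib_left mult_ac)
  then show ?thesis
    by (simp add: complex_line_rotation_def matrix_vector_mult_add_rdistrib)
qed

lemma det_complex_line_rotation_matrix:
  assumes "cinner e e = 1"
  shows "det (mat 1 + (\<chi> i j. ((c - 1) * e$i) * cnj (e$j))) = c"
proof -
  have "det (mat 1 + (\<chi> i j. ((c - 1) * e$i) * cnj (e$j))) = 1 + (c - 1) * cinner e e"
    using det_mat_1_plus_outer[of "\<chi> i. (c - 1) * e$i" "\<chi> j. cnj (e$j)"]
    by (simp add: cinner_def sum_distrib_left mult_ac)
  with assms show ?thesis by simp
qed

lemma form_image_complex_line_rotation: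
  assumes "cinner e e = 1" "c \<noteq> 0"
  shows "form_image (complex_line_rotation e c) std_form = (\<lambda>V. Re (inverse c * det (\<chi> i j. V j $ i)))"
  using det_complex_line_rotation_matrix[OF assms(1), of "inverse c"]
  by (simp add: form_image_def std_form_def inv_complex_line_rotation[OF assms]
      complex_line_rotation_matrix matrix_columns_mult_vector det_mul)

lemma SL_calibration_Re_cis_det: "SL_calibration (\<lambda>V. Re (cis \<theta> * det (\<chi> i j. V j $ i)))"
  unfolding SL_calibration_def
proof (intro exI conjI)
  have "adjoint_mat (mat 1 :: complex^'n^'n) = mat 1"
    by (simp add: adjoint_mat_def mat_def vec_eq_iff)
  then show "unitary_mat (mat 1 :: complex^'n^'n)"
    by (simp add: unitary_mat_def)
  show "(\<lambda>V. Re (cis \<theta> * det (\<chi> i j. V j $ i))) =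
      (\<lambda>V. Re (exp (\<i> * of_real \<theta>) * det (\<chi> i j. (mat 1 *v V j) $ i)))"
    by (simp add: cis_conv_exp)
qed

lemma sum_cis_multiples_eq_0:
  assumes "cis \<theta> \<noteq> 1" "cis (real k * \<theta>) = 1"
  shows "(\<Sum>i<k. cis (real i * \<theta>)) = 0"
proof -
  have "cis \<theta> ^ k = 1" using assms(2) by (simp only: Complex.DeMoivre)
  then show ?thesis
    unfolding Complex.DeMoivre[symmetric] using assms(1) by (simp add: sum_gp_strict)
qed

theorem lemma4:
  fixes P :: "(complex^'n::finite) set" and e1 e2 :: "complex^'n"
    and k :: nat and \<alpha> :: real
  assumes "CARD('n) \<ge> 2"
    and "complex_subspace P"
    and "dim P = 2 * CARD('n) - 2"
    and "norm e1 = 1" and "norm e2 = 1" and "e1 \<bullet> e2 = 0"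
    and "\<forall>x\<in>P. x \<bullet> e1 = 0 \<and> x \<bullet> e2 = 0"
    and "k > 0" and "real k * \<alpha> = 2 * pi" and "0 < \<alpha>" and "\<alpha> \<le> pi"
  shows "(\<forall>i<k. SL_calibration (form_image (plane_rotation e1 e2 (real i * \<alpha>)) std_form))
       \<and> (\<forall>V. (\<Sum>i<k. form_image (plane_rotation e1 e2 (real i * \<alpha>)) std_form V) = 0)"
proof -
  have "e2 = cinner e1 e2 *s e1"
    using assms(2-4,7) by (intro orthogonal_complex_hyperplane_in_line) auto
  then obtain s where s: "s \<in> {1, -1}" and e2: "e2 = (\<i> * of_real s) *s e1"
    using orthonormal_complex_multiple[OF assms(4-6)] by blast
  have form: "form_image (plane_rotation e1 e2 \<beta>) std_form
      = (\<lambda>V. Re (cis (- (s * \<beta>)) * det (\<chi> i j. V j $ i)))" for \<beta>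
    using form_image_complex_line_rotation[OF cinner_self_eq_1[OF assms(4)], of "cis (s * \<beta>)"]
    by (simp add: e2 plane_rotation_eq_complex_line_rotation[OF s])
  have "cos \<alpha> \<noteq> 1"
    using cos_inj_pi[of \<alpha> 0] assms(10,11) by auto
  then have "cis (- (s * \<alpha>)) \<noteq> 1"
    using s by (auto simp: complex_eq_iff)
  moreover have "cis (real k * - (s * \<alpha>)) = 1"
    using s assms(9) by (auto simp: complex_eq_iff algebra_simps)
  ultimately have "(\<Sum>i<k. cis (real i * - (s * \<alpha>))) = 0"
    by (rule sum_cis_multiples_eq_0)
  then have "(\<Sum>i<k. cis (- (s * (real i * \<alpha>)))) = 0"
    by (simp add: mult_ac)
  then have "(\<Sum>i<k. Re (cis (- (s * (real i * \<alpha>))) * d)) = 0" for d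
    by (metis Re_sum sum_distrib_right mult_zero_left zero_complex.sel(1))
  then show ?thesis
    unfolding form using SL_calibration_Re_cis_det by blast
qed

end
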